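(* Let $r\ne0$ be an integer, $K$ a field of characteristic not dividing $2r$, and $E_r$ the elliptic curve $y^2=x^3-r^{-1}x$ over $K$, embedded in $\mathbb{P}^2$ as $x^3-rxz^2-ry^2z=0$ (the affine point $(x,y)$ corresponding to $(x:y:r^{-1})$, and $O=(0:1:0)$). Let $Q=(a,b)$ be an affine point of $E_r$ such that the translation $\tau_Q:P\mapsto P+Q$ of $E_r$ is the restriction to $E_r$ of some $\bar\varphi\in\mathrm{PGL}_3(K)$ with $\bar\varphi(E_r)\subseteq E_r$. Then $3r^2a^4-6ra^2-1=0$. *)

theory Defs
  imports "HOL-Analysis.Analysis" "HOL-Algebra.Algebraic_Closure_Type"
begin

datatype 'a ecpt = Inf | Aff 'a 'a

text \<open>The Weierstrass coefficient A = - r^(-1) of E_r : y^2 = x^3 + A x.\<close>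
definition coefA :: "int \<Rightarrow> 'a::field" where
  "coefA r = - inverse (of_int r)"

definition on_Er :: "int \<Rightarrow> 'a::field ecpt \<Rightarrow> bool" where
  "on_Er r P = (case P of Inf \<Rightarrow> True
     | Aff x y \<Rightarrow> y ^ 2 = x ^ 3 - inverse (of_int r) * x)"

fun ec_add :: "int \<Rightarrow> 'a::field ecpt \<Rightarrow> 'a ecpt \<Rightarrow> 'a ecpt" where
  "ec_add r Inf P = P"
| "ec_add r (Aff x1 y1) Inf = Aff x1 y1"
| "ec_add r (Aff x1 y1) (Aff x2 y2) =
     (if x1 = x2 then
        (if y1 = - y2 then Inf
         else (let l = (3 * x1 ^ 2 + coefA r) / (2 * y1);
                   x3 = l ^ 2 - 2 * x1
               in Aff x3 (l * (x1 - x3) - y1)))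
      else (let l = (y2 - y1) / (x2 - x1);
                x3 = l ^ 2 - x1 - x2
            in Aff x3 (l * (x1 - x3) - y1)))"

text \<open>Embedding of E_r into P^2 as X^3 - r X Z^2 - r Y^2 Z = 0:
  (x, y) goes to (x : y : r^(-1)), and O goes to (0 : 1 : 0).
  Projective points are represented by nonzero vectors in K^3.\<close>
definition proj_pt :: "int \<Rightarrow> 'a::field ecpt \<Rightarrow> 'a^3" where
  "proj_pt r P = (case P of Inf \<Rightarrow> vector [0, 1, 0]
     | Aff x y \<Rightarrow> vector [x, y, inverse (of_int r)])"

definition cubic_Er :: "int \<Rightarrow> 'a::field^3 \<Rightarrow> bool" where
  "cubic_Er r v = (v $ 1 ^ 3 - of_int r * v $ 1 * v $ 3 ^ 2 - of_int r * v $ 2 ^ 2 * v $ 3 = 0)"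

definition proj_Er :: "int \<Rightarrow> ('a::field^3) set" where
  "proj_Er r = {v. v \<noteq> 0 \<and> cubic_Er r v}"

definition proj_eq :: "'a::field^3 \<Rightarrow> 'a^3 \<Rightarrow> bool" where
  "proj_eq u v = (u \<noteq> 0 \<and> v \<noteq> 0 \<and> (\<exists>c. c \<noteq> 0 \<and> v = c *s u))"

definition mat_ac :: "'a::field^3^3 \<Rightarrow> 'a alg_closure^3^3" where
  "mat_ac M = (\<chi> i j. to_ac (M $ i $ j))"

end

theory Submission
  imports Defs
begin

text \<open>A linear map of \<open>P^2\<close> preserves collinearity, and three points of the cubic are
  collinear exactly when they sum to \<open>O\<close>. The points \<open>O, Q, -Q\<close> lie on the vertical line
  through \<open>Q\<close>; on coordinate vectors, \<open>(a, b, r\<^sup>-\<^sup>1) = (a, -b, r\<^sup>-\<^sup>1) + 2b (0, 1, 0)\<close>.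
  Their images \<open>Q, 2Q, O\<close> are therefore collinear, so \<open>x(2Q) = x(Q)\<close>, i.e. \<open>Q\<close> is a
  3-torsion point, and the claimed quartic is the 3-division polynomial of \<open>E_r\<close>.

  The translation matrix lives over the algebraic closure, so the argument is carried out there.
  A 2-torsion \<open>Q\<close> is excluded: \<open>\<tau>_Q\<close> maps the two other 2-torsion points, which span the
  line \<open>Y = 0\<close> through \<open>Q\<close>, into that line, but maps \<open>Q\<close> to \<open>O\<close>, which is off it.\<close>

definition proj_translation :: "int \<Rightarrow> 'a::field^3^3 \<Rightarrow> 'a ecpt \<Rightarrow> bool" where
  "proj_translation r N Q \<longleftrightarrow>
     (\<forall>P. on_Er r P \<longrightarrow> proj_eq (N *v proj_pt r P) (proj_pt r (ec_add r P Q)))"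

lemma proj_translationD:
  assumes "proj_translation r N Q" and "on_Er r P"
  obtains c where "c \<noteq> 0" and "proj_pt r (ec_add r P Q) = c *s (N *v proj_pt r P)"
  using assms unfolding proj_translation_def proj_eq_def by blast

lemma proj_pt_Aff_eq_neg_plus_Inf:
  "proj_pt r (Aff x y) = proj_pt r (Aff x (- y)) + (2 * y) *s proj_pt r Inf"
  by (simp add: proj_pt_def vec_eq_iff forall_3)

lemma neg_neq_self:
  fixes x :: "'a::field"
  assumes "2 \<noteq> (0::'a)" and "x \<noteq> 0"
  shows "x \<noteq> - x"
  using assms by (simp add: eq_neg_iff_add_eq_0 flip: mult_2)

lemma ec_add_double_Aff:
  assumes "y \<noteq> - y"
  obtains y2 where
    "ec_add r (Aff x y) (Aff x y) = Aff (((3 * x ^ 2 + coefA r) / (2 * y)) ^ 2 - 2 * x) y2"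
  using assms by (simp add: Let_def)

lemma ec_add_two_torsion:
  assumes "e \<noteq> x"
  obtains z where "ec_add r (Aff e 0) (Aff x 0) = Aff z 0"
  using assms by (simp add: Let_def)

lemma proj_translation_double_x:
  fixes N :: "'a::field^3^3"
  assumes r: "of_int r \<noteq> (0::'a)"
    and Q: "on_Er r (Aff x y)"
    and T: "proj_translation r N (Aff x y)"
    and double: "ec_add r (Aff x y) (Aff x y) = Aff x2 y2"
  shows "x2 = x"
proof -
  have "on_Er r (Aff x (- y))" using Q by (simp add: on_Er_def)
  moreover have "ec_add r (Aff x (- y)) (Aff x y) = Inf" by simp
  ultimately obtain c2
    where "c2 \<noteq> 0" and "proj_pt r Inf = c2 *s (N *v proj_pt r (Aff x (- y)))"
    using T by (metis proj_translationD)
  then have neg1: "(N *v proj_pt r (Aff x (- y))) $ 1 = 0"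
    and neg3: "(N *v proj_pt r (Aff x (- y))) $ 3 = 0"
    by (auto simp: proj_pt_def vec_eq_iff dest: spec[of _ 1] spec[of _ 3])
  obtain c0 where "c0 \<noteq> 0" and c0: "proj_pt r (Aff x y) = c0 *s (N *v proj_pt r Inf)"
    using T proj_translationD[of r N "Aff x y" Inf] by (auto simp: on_Er_def)
  obtain c1 where c1: "proj_pt r (Aff x2 y2) = c1 *s (N *v proj_pt r (Aff x y))"
    using T Q double by (metis proj_translationD)
  have "N *v proj_pt r (Aff x y) =
      N *v proj_pt r (Aff x (- y)) + (2 * y) *s (N *v proj_pt r Inf)"
    by (subst proj_pt_Aff_eq_neg_plus_Inf)
      (simp add: matrix_vector_right_distrib vector_scalar_commute)
  with c1 neg1 neg3 have
    "x2 = c1 * (2 * y) * (N *v proj_pt r Inf) $ 1" and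
    "inverse (of_int r) = c1 * (2 * y) * (N *v proj_pt r Inf) $ 3"
    by (auto simp: proj_pt_def vec_eq_iff dest: spec[of _ 1] spec[of _ 3])
  moreover have "x = c0 * (N *v proj_pt r Inf) $ 1"
    and "inverse (of_int r) = c0 * (N *v proj_pt r Inf) $ 3"
    using c0 by (auto simp: proj_pt_def vec_eq_iff dest: spec[of _ 1] spec[of _ 3])
  ultimately show ?thesis
    using r by (metis mult_cancel_right inverse_nonzero_iff_nonzero mult_zero_right)
qed

lemma double_x_fixed_imp_division_poly3:
  fixes x y :: "'a::field"
  assumes two: "2 \<noteq> (0::'a)" and r: "of_int r \<noteq> (0::'a)"
    and Q: "on_Er r (Aff x y)" and "y \<noteq> 0"
    and fixed: "((3 * x ^ 2 + coefA r) / (2 * y)) ^ 2 - 2 * x = x"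
  shows "3 * of_int r ^ 2 * x ^ 4 - 6 * of_int r * x ^ 2 - 1 = 0"
proof -
  define s :: 'a where "s = inverse (of_int r)"
  have curve: "y ^ 2 = x ^ 3 - s * x" using Q by (simp add: on_Er_def s_def)
  have "(2 * y) ^ 2 \<noteq> 0" using two \<open>y \<noteq> 0\<close> by (intro power_not_zero) simp
  moreover have "((3 * x ^ 2 - s) / (2 * y)) ^ 2 = 3 * x"
    using fixed by (simp add: coefA_def s_def)
  ultimately have "(3 * x ^ 2 - s) ^ 2 = 12 * x * y ^ 2"
    by (simp add: power_divide field_simps)
  then have "3 * x ^ 4 - 6 * s * x ^ 2 - s ^ 2 = 0"
    unfolding curve by (simp add: algebra_simps eval_nat_numeral)
  then have "of_int r ^ 2 * (3 * x ^ 4 - 6 * s * x ^ 2 - s ^ 2) = 0" by simp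
  then show ?thesis
    using r by (simp add: s_def algebra_simps eval_nat_numeral)
qed

lemma two_torsion_other_roots:
  fixes x :: "'a::alg_closed_field"
  assumes two: "2 \<noteq> (0::'a)" and r: "of_int r \<noteq> (0::'a)" and Q: "on_Er r (Aff x 0)"
  obtains e1 e2 where "e1 \<noteq> e2" "e1 \<noteq> x" "e2 \<noteq> x"
    and "on_Er r (Aff e1 0)" "on_Er r (Aff e2 0)"
proof -
  define s :: 'a where "s = inverse (of_int r)"
  have "s \<noteq> 0" using r by (simp add: s_def)
  have root: "on_Er r (Aff e 0) \<longleftrightarrow> e * (e ^ 2 - s) = 0" for e
    by (auto simp: on_Er_def s_def algebra_simps eval_nat_numeral)
  show ?thesis
  proof (cases "x = 0")
    case True
    obtain t where t: "t ^ 2 = s" using nth_root_exists[of 2 s] by auto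
    with \<open>s \<noteq> 0\<close> have "t \<noteq> 0" by auto
    show ?thesis
    proof (rule that[of t "- t"])
      show "t \<noteq> - t" using \<open>t \<noteq> 0\<close> two by (rule neg_neq_self[rotated])
      show "on_Er r (Aff t 0)" "on_Er r (Aff (- t) 0)" using t root by simp_all
    qed (use True \<open>t \<noteq> 0\<close> in simp_all)
  next
    case False
    then have "x ^ 2 = s" using Q root by simp
    show ?thesis
    proof (rule that[of "- x" 0])
      show "- x \<noteq> x" using neg_neq_self[OF two False] by (metis minus_minus)
      show "on_Er r (Aff (- x) 0)" using \<open>x ^ 2 = s\<close> root by simp
    qed (use False root in simp_all)
  qed
qed

lemma no_proj_translation_by_two_torsion:
  fixes N :: "'a::alg_closed_field^3^3"
  assumes two: "2 \<noteq> (0::'a)" and r: "of_int r \<noteq> (0::'a)" and Q: "on_Er r (Aff x 0)"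
  shows "\<not> proj_translation r N (Aff x 0)"
proof
  assume T: "proj_translation r N (Aff x 0)"
  define s :: 'a where "s = inverse (of_int r)"
  have "s \<noteq> 0" using r by (simp add: s_def)
  have row2: "N $ 2 $ 1 * e + N $ 2 $ 3 * s = 0" if "on_Er r (Aff e 0)" and "e \<noteq> x" for e
  proof -
    obtain z where "ec_add r (Aff e 0) (Aff x 0) = Aff z 0"
      using ec_add_two_torsion \<open>e \<noteq> x\<close> by blast
    with T \<open>on_Er r (Aff e 0)\<close> obtain c
      where "proj_pt r (Aff z 0) = c *s (N *v proj_pt r (Aff e 0))" and "c \<noteq> 0"
      by (metis proj_translationD)
    from this(1)[THEN arg_cong[where f = "\<lambda>v :: 'a^3. v $ 2"]] \<open>c \<noteq> 0\<close> show ?thesis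
      by (simp add: proj_pt_def s_def matrix_vector_mult_def sum_3)
  qed
  obtain e1 e2 where "e1 \<noteq> e2" "e1 \<noteq> x" "e2 \<noteq> x" "on_Er r (Aff e1 0)" "on_Er r (Aff e2 0)"
    using two_torsion_other_roots[OF two r Q] by blast
  then have "N $ 2 $ 1 * (e1 - e2) =
      (N $ 2 $ 1 * e1 + N $ 2 $ 3 * s) - (N $ 2 $ 1 * e2 + N $ 2 $ 3 * s)"
    by (simp add: algebra_simps)
  also have "\<dots> = 0"
    using row2 \<open>e1 \<noteq> x\<close> \<open>e2 \<noteq> x\<close> \<open>on_Er r (Aff e1 0)\<close> \<open>on_Er r (Aff e2 0)\<close> by simp
  finally have "N $ 2 $ 1 * (e1 - e2) = 0" .
  with \<open>e1 \<noteq> e2\<close> have "N $ 2 $ 1 = 0" by simp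
  with row2[of e1] \<open>e1 \<noteq> x\<close> \<open>on_Er r (Aff e1 0)\<close> \<open>s \<noteq> 0\<close> have "N $ 2 $ 3 = 0" by simp
  have "ec_add r (Aff x 0) (Aff x 0) = Inf" by simp
  with T Q obtain c where "proj_pt r Inf = c *s (N *v proj_pt r (Aff x 0))"
    by (metis proj_translationD)
  from this[THEN arg_cong[where f = "\<lambda>v :: 'a^3. v $ 2"]] show False
    using \<open>N $ 2 $ 1 = 0\<close> \<open>N $ 2 $ 3 = 0\<close>
    by (simp add: proj_pt_def matrix_vector_mult_def sum_3)
qed

lemma on_Er_to_ac_iff: "on_Er r (Aff (to_ac x) (to_ac y)) \<longleftrightarrow> on_Er r (Aff x y)"
proof -
  have "on_Er r (Aff (to_ac x) (to_ac y)) \<longleftrightarrow>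
      to_ac (y ^ 2) = to_ac (x ^ 3 - inverse (of_int r) * x)"
    by (simp add: on_Er_def)
  then show ?thesis by (simp only: to_ac_eq_iff) (simp add: on_Er_def)
qed

theorem lemma3p6:
  fixes r :: int and a b :: "'k::field" and M :: "'k^3^3"
  assumes "r \<noteq> 0"
    and "\<not> int CHAR('k) dvd 2 * r"
    and Q: "on_Er r (Aff a b)"
    and M_inv: "invertible M"
    and M_pres: "\<forall>v \<in> proj_Er r. mat_ac M *v v \<in> proj_Er r"
    and M_transl: "\<forall>P. on_Er r P \<longrightarrow>
        proj_eq (mat_ac M *v proj_pt r P) (proj_pt r (ec_add r P (Aff (to_ac a) (to_ac b))))"
  shows "3 * of_int r ^ 2 * a ^ 4 - 6 * of_int r * a ^ 2 - 1 = 0"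
proof -
  have "of_int (2 * r) \<noteq> (0::'k)"
    using assms(2) of_int_eq_0_iff_char_dvd by blast
  then have two: "2 \<noteq> (0::'k alg_closure)" and r: "of_int r \<noteq> (0::'k alg_closure)"
    by (metis mult_eq_0_iff of_int_mult of_int_numeral to_ac_eq_0_iff to_ac_numeral to_ac_of_int)+
  have onQ: "on_Er r (Aff (to_ac a) (to_ac b))"
    using Q by (simp add: on_Er_to_ac_iff)
  have T: "proj_translation r (mat_ac M) (Aff (to_ac a) (to_ac b))"
    using M_transl by (simp add: proj_translation_def)
  have "to_ac b \<noteq> 0"
    using no_proj_translation_by_two_torsion[OF two r] onQ T by metis
  then obtain y2 where "ec_add r (Aff (to_ac a) (to_ac b)) (Aff (to_ac a) (to_ac b)) =
      Aff (((3 * to_ac a ^ 2 + coefA r) / (2 * to_ac b)) ^ 2 - 2 * to_ac a) y2"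
    using ec_add_double_Aff neg_neq_self[OF two] by blast
  with r onQ T have "((3 * to_ac a ^ 2 + coefA r) / (2 * to_ac b)) ^ 2 - 2 * to_ac a = to_ac a"
    by (rule proj_translation_double_x)
  with two r onQ \<open>to_ac b \<noteq> 0\<close>
  have "3 * of_int r ^ 2 * to_ac a ^ 4 - 6 * of_int r * to_ac a ^ 2 - 1 = 0"
    by (rule double_x_fixed_imp_division_poly3)
  then have "to_ac (3 * of_int r ^ 2 * a ^ 4 - 6 * of_int r * a ^ 2 - 1) = 0"
    by simp
  then show ?thesis by (simp only: to_ac_eq_0_iff)
qed

end
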